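(* There exists a $\Gamma_2$-equivariant continuous map $f:S(U'_1\oplus U'_1)\to S(U'_2\oplus V'_1)$.
   Context: $\Gamma_2=S^1\rtimes C_2\cong \mathrm{O}(2)$, where $C_2=\langle a\rangle$ and $a t a^{-1}=t^{-1}$ for $t\in S^1$. For $k\in\mathbb{Z}$, $U'_k$ is the real $2$-dimensional orthogonal $\Gamma_2$-representation on $\mathbb{C}\cong\mathbb{R}^2$ with $t\cdot z=t^kz$ for $t\in S^1$ and $a\cdot z=\bar z$. $V'_1$ is the $1$-dimensional real representation on which $S^1$ acts trivially and $a$ acts by $x\mapsto -x$. $S(\cdot)$ denotes the unit sphere. *)

theory Defs
  imports "HOL-Analysis.Analysis"
begin

text \<open>Gamma_2 = S^1 semidirect C_2 = O(2). An element is written t a^e with t a unit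
complex number and e :: bool (e = True means the factor a is present).
Action of t a^e on U'_k (= complex numbers): z \<mapsto> t^k * (a^e z), a z = cnj z.\<close>

definition actU :: "int \<Rightarrow> complex \<Rightarrow> bool \<Rightarrow> complex \<Rightarrow> complex" where
  "actU k t e z = t powi k * (if e then cnj z else z)"

text \<open>Action on V'_1 (= reals): S^1 trivial, a acts by negation.\<close>
definition actV :: "complex \<Rightarrow> bool \<Rightarrow> real \<Rightarrow> real" where
  "actV t e x = (if e then - x else x)"

definition actU1U1 :: "complex \<Rightarrow> bool \<Rightarrow> complex \<times> complex \<Rightarrow> complex \<times> complex" where
  "actU1U1 t e p = (actU 1 t e (fst p), actU 1 t e (snd p))"

definition actU2V1 :: "complex \<Rightarrow> bool \<Rightarrow> complex \<times> real \<Rightarrow> complex \<times> real" where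
  "actU2V1 t e p = (actU 2 t e (fst p), actV t e (snd p))"

end

theory Submission
  imports Defs
begin

text \<open>The polynomial map (z, w) \<mapsto> (z^2 + w^2, Im (z * cnj w)) is equivariant from
U'_1 + U'_1 to U'_2 + V'_1: the first coordinate transforms like z^2, and Im (z * cnj w) is
S^1-invariant and changes sign under conjugation. It vanishes only at the origin,
since z^2 = -w^2 makes z * cnj w a square root of -|w|^4, which is real only for w = 0.
Normalising it therefore gives an equivariant map between the unit spheres.\<close>

definition quadratic_equivariant :: "complex \<times> complex \<Rightarrow> complex \<times> real" where
  "quadratic_equivariant p = ((fst p)\<^sup>2 + (snd p)\<^sup>2, Im (fst p * cnj (snd p)))"

lemma quadratic_equivariant_eq_0_iff: "quadratic_equivariant p = 0 \<longleftrightarrow> p = 0"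
proof
  obtain z w where p: "p = (z, w)" by fastforce
  assume "quadratic_equivariant p = 0"
  then have sq: "z\<^sup>2 = - w\<^sup>2" and im: "Im (z * cnj w) = 0"
    by (auto simp: quadratic_equivariant_def p zero_prod_def add_eq_0_iff2)
  define r where "r = Re (z * cnj w)"
  have "complex_of_real (r\<^sup>2) = (z * cnj w)\<^sup>2"
    using im by (simp add: r_def complex_eq_iff power2_eq_square)
  also have "\<dots> = - (w * cnj w)\<^sup>2"
    using sq by (simp add: power_mult_distrib)
  also have "\<dots> = - complex_of_real (((cmod w)\<^sup>2)\<^sup>2)"
    by (metis complex_norm_square of_real_power)
  finally have "r\<^sup>2 + ((cmod w)\<^sup>2)\<^sup>2 = 0"
    by (metis add_eq_0_iff2 of_real_eq_iff of_real_minus)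
  then have "((cmod w)\<^sup>2)\<^sup>2 = 0"
    using zero_le_power2[of r] zero_le_power2[of "(cmod w)\<^sup>2"] by linarith
  then have "w = 0" by simp
  with sq show "p = 0" by (simp add: p zero_prod_def)
qed (simp add: quadratic_equivariant_def zero_prod_def)

lemma actU1_square_add: "(actU 1 t e z)\<^sup>2 + (actU 1 t e w)\<^sup>2 = actU 2 t e (z\<^sup>2 + w\<^sup>2)"
  by (cases e) (simp_all add: actU_def power_mult_distrib distrib_left)

lemma actU1_mult_cnj:
  assumes "norm t = 1"
  shows "actU 1 t e z * cnj (actU 1 t e w) = (if e then cnj (z * cnj w) else z * cnj w)"
proof -
  have "t * cnj t = 1"
    using assms by (metis complex_norm_square of_real_1 power_one)
  moreover have "actU 1 t e z * cnj (actU 1 t e w) =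
      (t * cnj t) * (if e then cnj (z * cnj w) else z * cnj w)"
    by (cases e) (simp_all add: actU_def ac_simps)
  ultimately show ?thesis by simp
qed

lemma quadratic_equivariant_act:
  assumes "norm t = 1"
  shows "quadratic_equivariant (actU1U1 t e p) = actU2V1 t e (quadratic_equivariant p)"
  using actU1_mult_cnj[OF assms, of e "fst p" "snd p"]
  by (simp add: quadratic_equivariant_def actU1U1_def actU2V1_def actV_def actU1_square_add)

lemma sgn_linear_isometry:
  fixes A :: "'a::real_normed_vector \<Rightarrow> 'b::real_normed_vector"
  assumes "linear A" and "\<And>x. norm (A x) = norm x"
  shows "sgn (A x) = A (sgn x)"
  by (simp add: sgn_div_norm assms linear.scaleR)

lemma linear_actU2V1: "linear (actU2V1 t e)"
  by (intro linearI)
    (auto simp: actU2V1_def actU_def actV_def algebra_simps scaleR_conv_of_real)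

lemma norm_actU2V1: "norm t = 1 \<Longrightarrow> norm (actU2V1 t e q) = norm q"
  by (cases q) (auto simp: actU2V1_def actU_def actV_def norm_prod_def norm_mult norm_power)

theorem lemma3p3:
  shows "\<exists>f :: complex \<times> complex \<Rightarrow> complex \<times> real.
           continuous_on (sphere 0 1) f \<and>
           f ` sphere 0 1 \<subseteq> sphere 0 1 \<and>
           (\<forall>t e p. norm t = 1 \<longrightarrow> p \<in> sphere 0 1 \<longrightarrow>
               f (actU1U1 t e p) = actU2V1 t e (f p))"
proof (intro exI conjI allI impI)
  let ?f = "\<lambda>p. sgn (quadratic_equivariant p)"
  have nonzero: "p \<in> sphere 0 1 \<Longrightarrow> quadratic_equivariant p \<noteq> 0" for p
    by (auto simp: quadratic_equivariant_eq_0_iff)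
  have "continuous_on (sphere 0 1) quadratic_equivariant"
    unfolding quadratic_equivariant_def by (intro continuous_intros)
  with nonzero show "continuous_on (sphere 0 1) ?f"
    by (intro continuous_on_sgn) auto
  show "?f ` sphere 0 1 \<subseteq> sphere 0 1"
    using nonzero by (auto simp: norm_sgn)
  fix t :: complex and e :: bool and p :: "complex \<times> complex"
  assume "norm t = 1" and "p \<in> sphere 0 1"
  then show "?f (actU1U1 t e p) = actU2V1 t e (?f p)"
    by (simp add: quadratic_equivariant_act sgn_linear_isometry linear_actU2V1 norm_actU2V1)
qed

end
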